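(* Let $h$ and $k$ be coprime odd integers with $k>0$. Then $$B_{1}(h,k)=\frac{h}{2k}\sum_{\substack{j=1\\ j\neq\frac{k+1}{2}}}^{k}\tan\left(\frac{\pi h(2j-1)}{2k}\right)\cot\left(\frac{\pi(2j-1)}{2k}\right)+\frac{1}{2k}-\frac{1}{2}.$$
   Context: $[x]$ denotes the greatest integer $\le x$. For integers $h,k$ with $k>0$ and $\gcd(h,k)=1$, $$B_{1}(h,k)=\sum_{j=1}^{k-1}(-1)^{j+\left[\frac{hj}{k}\right]}\left[\frac{hj}{k}\right].$$ *)

theory Defs
  imports Complex_Main
begin

definition B1 :: "int \<Rightarrow> int \<Rightarrow> real" where
  "B1 h k = (\<Sum>j\<in>{1..k-1}.
     let f = \<lfloor>real_of_int (h * j) / real_of_int k\<rfloor> in (if even (j + f) then 1 else -1) * real_of_int f)"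

end

theory Submission
  imports Defs "HOL-Number_Theory.Cong"
begin

text \<open>
  Write \<open>r\<^sub>j = hj mod k\<close>. As \<open>h\<close> and \<open>k\<close> are odd, \<open>(-1)^(j + [hj/k]) = (-1)^r\<^sub>j\<close>, and since
  \<open>j \<mapsto> r\<^sub>j\<close> permutes \<open>1..k-1\<close>, \<open>B\<^sub>1(h,k)\<close> equals \<open>h \<Sum>\<^sub>j (-1)^r\<^sub>j (j/k - 1/2) - (k-1)/(2k)\<close>.
  For \<open>k \<not>| n\<close> the sign \<open>(-1)^[n/k]\<close> has the finite Fourier expansion
  \<open>(1/k) \<Sum>\<^sub>i cot \<theta>\<^sub>i sin (2n\<theta>\<^sub>i)\<close> with \<open>\<theta>\<^sub>i = \<pi>(2i+1)/(2k)\<close>; it is proved by induction on \<open>n\<close>,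
  the increments being sums of cosines over roots of unity. Substituting it for \<open>(-1)^r\<^sub>j\<close> and
  exchanging the sums leaves \<open>\<Sum>\<^sub>j (-1)^j (j/k - 1/2) sin (2j\<phi>)\<close> at \<open>\<phi> = h\<theta>\<^sub>i\<close>, which is
  \<open>tan \<phi> / 2\<close> because \<open>z = -e^(2i\<phi>)\<close> is a \<open>k\<close>-th root of unity there.
\<close>

lemma sum_powers_eq_0_if_root_of_unity:
  fixes z :: "'a :: field"
  assumes "z ^ n = 1" "z \<noteq> 1"
  shows "(\<Sum>j<n. z ^ j) = 0"
  using geometric_sum[OF assms(2), of n] assms(1) by simp

lemma weighted_geometric_sum_times_square:
  fixes z :: "'a :: comm_ring_1"
  shows "(z - 1)^2 * (\<Sum>j<n. of_nat j * z ^ j) = (of_nat n - 1) * z ^ (n + 1) - of_nat n * z ^ n + z"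
  by (induction n) (auto simp: algebra_simps power2_eq_square)

lemma weighted_sum_powers_if_root_of_unity:
  fixes z :: "'a :: field"
  assumes "z ^ n = 1" "z \<noteq> 1"
  shows "(\<Sum>j<n. of_nat j * z ^ j) = of_nat n / (z - 1)"
proof -
  have nz: "z - 1 \<noteq> 0" using assms(2) by simp
  have "(z - 1)^2 * (\<Sum>j<n. of_nat j * z ^ j) = (z - 1) * of_nat n"
    using weighted_geometric_sum_times_square[of z n] assms(1) by (simp add: algebra_simps)
  then have "(z - 1) * ((z - 1) * (\<Sum>j<n. of_nat j * z ^ j)) = (z - 1) * of_nat n"
    by (simp add: power2_eq_square algebra_simps)
  then have "(z - 1) * (\<Sum>j<n. of_nat j * z ^ j) = of_nat n" using nz by simp
  then show ?thesis using nz by (simp add: field_simps)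
qed

lemma one_minus_cis_double: "1 - cis (2 * \<phi>) = - 2 * \<i> * of_real (sin \<phi>) * cis \<phi>"
  using cos_double_sin[of \<phi>] sin_double[of \<phi>] by (simp add: complex_eq_iff power2_eq_square algebra_simps)

lemma one_plus_cis_double: "1 + cis (2 * \<phi>) = 2 * of_real (cos \<phi>) * cis \<phi>"
  using cos_double_cos[of \<phi>] sin_double[of \<phi>] by (simp add: complex_eq_iff power2_eq_square algebra_simps)

lemma sum_alternating_sawtooth_sin:
  fixes n :: nat and \<phi> :: real
  assumes "odd n" and "cos (2 * real n * \<phi>) = -1"
  shows "(\<Sum>j=1..<n. (-1)^j * (real j / n - 1/2) * sin (2 * real j * \<phi>)) = tan \<phi> / 2"
proof -
  define z where "z = - cis (2 * \<phi>)"
  have z_power: "z ^ j = (-1)^j * cis (2 * real j * \<phi>)" for j :: nat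
    unfolding z_def by (subst power_minus) (simp add: DeMoivre mult_ac)
  have lhs: "(\<Sum>j=1..<n. (-1)^j * (real j / n - 1/2) * sin (2 * real j * \<phi>))
      = Im (\<Sum>j=1..<n. of_real (real j / n - 1/2) * z ^ j)"
    by (simp add: Im_sum z_power mult_ac)
  have z_plus_1: "z + 1 = - 2 * \<i> * of_real (sin \<phi>) * cis \<phi>"
    using one_minus_cis_double[of \<phi>] by (simp add: z_def)
  have z_minus_1: "z - 1 = - 2 * of_real (cos \<phi>) * cis \<phi>"
    using one_plus_cis_double[of \<phi>] by (simp add: z_def algebra_simps)
  show ?thesis
  proof (cases "cos \<phi> = 0")
    case True
    \<comment> \<open>Then \<open>tan \<phi> = 0\<close> by the division-by-zero convention, and \<open>z = 1\<close> makes the sum real.\<close>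
    then have "z = 1" using z_minus_1 by simp
    then show ?thesis using lhs True by (simp add: tan_def)
  next
    case False
    have "z - 1 \<noteq> 0" using False z_minus_1 by simp
    moreover have "cis (2 * real n * \<phi>) = -1"
      using assms(2) sin_cos_squared_add[of "2 * real n * \<phi>"] by (simp add: complex_eq_iff)
    then have "z ^ n = 1" using z_power[of n] assms(1) by simp
    moreover have "n > 0" using assms(1) by (cases n) auto
    ultimately have "(\<Sum>j<n. of_real (real j / n - 1/2) * z ^ j) = 1 / (z - 1)"
    proof -
      have "(\<Sum>j<n. of_real (real j / n - 1/2) * z ^ j)
          = (\<Sum>j<n. of_nat j * z ^ j) / of_nat n - (\<Sum>j<n. z ^ j) / 2"
        by (simp add: sum_subtractf sum_divide_distrib algebra_simps diff_divide_distrib)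
      then show ?thesis
        using sum_powers_eq_0_if_root_of_unity[of z n] weighted_sum_powers_if_root_of_unity[of z n]
          \<open>z ^ n = 1\<close> \<open>z - 1 \<noteq> 0\<close> \<open>n > 0\<close> by simp
    qed
    moreover have "(\<Sum>j<n. of_real (real j / n - 1/2) * z ^ j)
        = - 1/2 + (\<Sum>j=1..<n. of_real (real j / n - 1/2) * z ^ j)"
      using \<open>n > 0\<close> by (simp add: lessThan_atLeast0 sum.atLeast_Suc_lessThan)
    ultimately have "(\<Sum>j=1..<n. of_real (real j / n - 1/2) * z ^ j) = (z + 1) / (2 * (z - 1))"
      using \<open>z - 1 \<noteq> 0\<close> by (simp add: field_simps)
    also have "\<dots> = \<i> * of_real (tan \<phi>) / 2"
      unfolding z_plus_1 z_minus_1 using False by (simp add: tan_def field_simps)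
    finally have "(\<Sum>j=1..<n. of_real (real j / n - 1/2) * z ^ j) = \<i> * of_real (tan \<phi>) / 2" .
    then show ?thesis unfolding lhs by (simp only:) simp
  qed
qed

definition chebyshev_angle :: "nat \<Rightarrow> nat \<Rightarrow> real" where
  "chebyshev_angle K i = pi * (2 * real i + 1) / (2 * real K)"

lemma sin_chebyshev_angle_nonzero:
  assumes "i < K"
  shows "sin (chebyshev_angle K i) \<noteq> 0"
proof -
  have "(2 * real i + 1) / (2 * real K) < 1" using assms by (simp add: field_simps)
  then have "chebyshev_angle K i < pi"
    unfolding chebyshev_angle_def using mult_strict_left_mono[of _ 1 pi] by fastforce
  moreover have "0 < chebyshev_angle K i" using assms by (simp add: chebyshev_angle_def)
  ultimately show ?thesis using sin_gt_zero by force
qed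

lemma sum_cos_multiple_chebyshev_angle:
  assumes "K > 0"
  shows "(\<Sum>i<K. cos (2 * real r * chebyshev_angle K i))
           = (if K dvd r then real K * (-1)^(r div K) else 0)"
proof (cases "K dvd r")
  case True
  then obtain q where r: "r = K * q" by auto
  have "cos (2 * real r * chebyshev_angle K i) = (-1)^q" for i
  proof -
    have "2 * real r * chebyshev_angle K i = pi * real (q * (2 * i + 1))"
      using assms unfolding chebyshev_angle_def r by (simp add: field_simps)
    then have "cos (2 * real r * chebyshev_angle K i) = (-1)^(q * (2 * i + 1))"
      by (simp only: cos_npi2)
    then show ?thesis by (simp add: minus_one_power_iff)
  qed
  then show ?thesis using True assms r by simp
next
  case False
  define w where "w = cis (2 * pi * real r / real K)"
  have "w ^ K = cis (2 * pi * real r)" unfolding w_def DeMoivre using assms by (simp add: field_simps)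
  then have "w ^ K = 1" by simp
  moreover have "w \<noteq> 1"
  proof
    assume "w = 1"
    then obtain q :: int where "2 * pi * real r / real K = of_int q * 2 * pi"
      unfolding w_def by (auto simp: complex_eq_iff cos_one_2pi_int)
    then have "of_int (int r) = (of_int (q * int K) :: real)" using assms by (simp add: field_simps)
    then have "int K dvd int r" unfolding of_int_eq_iff by simp
    with False show False by simp
  qed
  moreover have "cos (2 * real r * chebyshev_angle K i) = Re (cis (pi * real r / real K) * w ^ i)" for i
  proof -
    have "pi * real r / real K + real i * (2 * pi * real r / real K) = 2 * real r * chebyshev_angle K i"
      using assms by (simp add: chebyshev_angle_def field_simps)
    then show ?thesis unfolding w_def DeMoivre cis_mult by simp
  qed
  then have "(\<Sum>i<K. cos (2 * real r * chebyshev_angle K i))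
      = Re (cis (pi * real r / real K) * (\<Sum>i<K. w ^ i))"
    by (simp only: Re_sum sum_distrib_left)
  ultimately show ?thesis using False sum_powers_eq_0_if_root_of_unity[of w K] by simp
qed

lemma cot_times_sin_diff:
  assumes "sin a \<noteq> 0"
  shows "cot a * (sin (2 * (real n + 1) * a) - sin (2 * real n * a))
           = cos (2 * (real n + 1) * a) + cos (2 * real n * a)"
proof -
  have "(2 * (real n + 1) * a - 2 * real n * a) / 2 = a"
    and "(2 * (real n + 1) * a + 2 * real n * a) / 2 = (2 * real n + 1) * a"
    by (simp_all add: algebra_simps)
  then show ?thesis unfolding sin_diff_sin cos_plus_cos cot_def using assms by (simp add: field_simps)
qed

lemma cot_sin_sum_chebyshev_angle_nat:
  assumes "K > 0"
  shows "(\<Sum>i<K. cot (chebyshev_angle K i) * sin (2 * real n * chebyshev_angle K i)) / real K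
           = (if K dvd n then 0 else (-1)^(n div K))"
proof -
  define S where "S n = (\<Sum>i<K. cot (chebyshev_angle K i) * sin (2 * real n * chebyshev_angle K i)) / real K"
    for n
  define jump :: "nat \<Rightarrow> real" where "jump n = (if K dvd n then (-1)^(n div K) else 0)" for n
  have "S n = (-1)^(n div K) - jump n" for n
  proof (induction n)
    case 0
    then show ?case by (simp add: S_def jump_def)
  next
    case (Suc n)
    have "S (Suc n) - S n
        = ((\<Sum>i<K. cos (2 * real (Suc n) * chebyshev_angle K i))
           + (\<Sum>i<K. cos (2 * real n * chebyshev_angle K i))) / real K"
      unfolding S_def diff_divide_distrib[symmetric] sum_subtractf[symmetric] sum.distrib[symmetric]
      using cot_times_sin_diff[OF sin_chebyshev_angle_nonzero, of _ K n]
      by (intro arg_cong2[where f = "(/)"] sum.cong) (auto simp: algebra_simps)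
    also have "\<dots> = jump (Suc n) + jump n"
      unfolding sum_cos_multiple_chebyshev_angle[OF assms] jump_def using assms by (auto simp: field_simps)
    finally have "S (Suc n) = S n + jump (Suc n) + jump n" by simp
    moreover have "(-1::real)^(Suc n div K) = (-1)^(n div K) + 2 * jump (Suc n)"
      using div_Suc[of n K] by (cases "K dvd Suc n") (auto simp: jump_def dvd_eq_mod_eq_0)
    ultimately show ?case unfolding Suc.IH by simp
  qed
  then show ?thesis unfolding S_def jump_def by simp
qed

definition parity_sign :: "int \<Rightarrow> real" where
  "parity_sign x = (if even x then 1 else -1)"

lemma parity_sign_add: "parity_sign (x + y) = parity_sign x * parity_sign y"
  by (simp add: parity_sign_def)

lemma parity_sign_of_nat: "parity_sign (int n) = (-1)^n"
  by (simp add: parity_sign_def)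

lemma cot_sin_sum_chebyshev_angle:
  assumes "K > 0" and "\<not> int K dvd n"
  shows "(\<Sum>i<K. cot (chebyshev_angle K i) * sin (2 * of_int n * chebyshev_angle K i)) / real K
           = parity_sign (n div int K)"
proof (cases "n \<ge> 0")
  case True
  then obtain m where "n = int m" by (metis nonneg_int_cases)
  then show ?thesis
    using assms cot_sin_sum_chebyshev_angle_nat[OF assms(1), of m]
    by (simp add: parity_sign_of_nat flip: of_nat_div)
next
  case False
  then obtain m where n: "n = - int m" by (metis neg_int_cases less_le_not_le linorder_le_less_linear)
  then have "\<not> K dvd m" using assms(2) by simp
  then have "n div int K = - int (m div K) - 1"
    unfolding n using assms(1) by (simp add: zdiv_zminus1_eq_if dvd_eq_mod_eq_0 flip: of_nat_mod of_nat_div)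
  moreover have "sin (2 * of_int n * x) = - sin (2 * real m * x)" for x
    unfolding n by (simp flip: sin_minus)
  ultimately show ?thesis
    using \<open>\<not> K dvd m\<close> cot_sin_sum_chebyshev_angle_nat[OF assms(1), of m]
    by (simp add: sum_negf parity_sign_def minus_one_power_iff)
qed

lemma sum_alternating_signs_odd_range:
  "(\<Sum>r=1..<2*a+1. (-1::real)^r) = 0"
  "(\<Sum>r=1..<2*a+1. (-1::real)^r * real r) = real a"
proof -
  have "2 * Suc a + 1 = Suc (Suc (2 * a + 1))" by simp
  then have "(\<Sum>r=1..<2*a+1. (-1::real)^r) = 0 \<and> (\<Sum>r=1..<2*a+1. (-1::real)^r * real r) = real a"
    by (induction a) (simp_all add: sum.atLeastLessThan_Suc)
  then show "(\<Sum>r=1..<2*a+1. (-1::real)^r) = 0" "(\<Sum>r=1..<2*a+1. (-1::real)^r * real r) = real a"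
    by simp_all
qed

lemma not_dvd_mult_if_coprime:
  assumes "coprime h (int K)" and "j \<in> {1..<K}"
  shows "\<not> int K dvd h * int j"
proof
  assume "int K dvd h * int j"
  then have "K dvd j" using assms(1) by (simp add: coprime_commute coprime_dvd_mult_right_iff)
  then show False using assms(2) by (auto dest: dvd_imp_le)
qed

lemma bij_betw_mult_mod:
  assumes "coprime h (int K)"
  shows "bij_betw (\<lambda>j. nat (h * int j mod int K)) {1..<K} {1..<K}"
proof -
  let ?r = "\<lambda>j. nat (h * int j mod int K)"
  have "inj_on ?r {1..<K}"
  proof (rule inj_onI)
    fix x y assume "x \<in> {1..<K}" "y \<in> {1..<K}" "?r x = ?r y"
    then have "[h * int x = h * int y] (mod int K)" by (simp add: cong_def nat_eq_iff2)
    then have "[int x = int y] (mod int K)" using assms by (simp add: cong_mult_lcancel coprime_commute)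
    then show "x = y" using \<open>x \<in> {1..<K}\<close> \<open>y \<in> {1..<K}\<close> by (simp add: cong_def)
  qed
  moreover have "?r j \<in> {1..<K}" if "j \<in> {1..<K}" for j
  proof -
    have "h * int j mod int K \<noteq> 0"
      using not_dvd_mult_if_coprime[OF assms that] by (simp add: dvd_eq_mod_eq_0)
    moreover have "0 \<le> h * int j mod int K" "h * int j mod int K < int K" using that by auto
    ultimately show ?thesis by auto
  qed
  then have "?r ` {1..<K} \<subseteq> {1..<K}" by blast
  ultimately show ?thesis
    by (simp add: bij_betw_def card_image card_subset_eq)
qed

lemma B1_eq_sum_floor_div:
  "B1 h (int K) = (\<Sum>j\<in>{1..<K}. parity_sign (int j + h * int j div int K) * of_int (h * int j div int K))"
proof -
  have "{1..int K - 1} = int ` {1..<K}"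
    by (simp add: atLeastLessThanPlusOne_atLeastAtMost_int[symmetric] image_int_atLeastLessThan)
  moreover have "\<lfloor>of_int h * real j / real K\<rfloor> = h * int j div int K" for j
    using floor_divide_of_int_eq[of "h * int j" "int K"] by simp
  ultimately show ?thesis
    unfolding B1_def by (simp add: sum.reindex Let_def parity_sign_def)
qed

lemma parity_sign_floor_div_eq_residue_sign:
  assumes "odd h" and "odd K"
  shows "parity_sign (int j + h * int j div int K) = (-1)^(nat (h * int j mod int K))"
proof -
  define q r where "q = h * int j div int K" and "r = h * int j mod int K"
  have "h * int j = int K * q + r" unfolding q_def r_def by simp
  then have "even (int j) \<longleftrightarrow> (even q \<longleftrightarrow> even r)"
    using assms by (metis even_add even_mult_iff even_of_nat)
  moreover have "r \<ge> 0" unfolding r_def using assms(2) by (cases K) auto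
  ultimately show ?thesis
    unfolding q_def[symmetric] r_def[symmetric]
    by (auto simp: parity_sign_def minus_one_power_iff even_nat_iff even_add)
qed

lemma B1_eq_alternating_residue_sum:
  assumes "coprime h (int K)" and "odd h" and "odd K"
  defines "r j \<equiv> nat (h * int j mod int K)"
  shows "B1 h (int K)
           = of_int h * (\<Sum>j\<in>{1..<K}. (-1)^(r j) * (real j / K - 1/2)) - (real K - 1) / (2 * real K)"
proof -
  obtain m where m: "K = 2 * m + 1" using assms(3) by (metis oddE)
  have floor_div: "of_int (h * int j div int K) = (of_int h * real j - real (r j)) / real K" for j
  proof -
    have "of_int (h * int j) = real K * of_int (h * int j div int K) + of_int (h * int j mod int K)"
      by (metis mult_div_mod_eq of_int_add of_int_mult of_int_of_nat_eq)
    moreover have "h * int j mod int K \<ge> 0" using m by simp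
    ultimately show ?thesis using m unfolding r_def by (simp add: field_simps)
  qed
  have signs: "(\<Sum>j\<in>{1..<K}. (-1::real)^(r j)) = 0"
    and weighted_signs: "(\<Sum>j\<in>{1..<K}. (-1::real)^(r j) * real (r j)) = real m"
    using sum.reindex_bij_betw[OF bij_betw_mult_mod[OF assms(1)], of "\<lambda>x. (-1::real)^x"]
      sum.reindex_bij_betw[OF bij_betw_mult_mod[OF assms(1)], of "\<lambda>x. (-1::real)^x * real x"]
      sum_alternating_signs_odd_range[of m]
    unfolding r_def m by simp_all
  have "B1 h (int K) = (\<Sum>j\<in>{1..<K}. (-1)^(r j) * ((of_int h * real j - real (r j)) / real K))"
    unfolding B1_eq_sum_floor_div parity_sign_floor_div_eq_residue_sign[OF assms(2,3)] floor_div r_def ..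
  also have "\<dots> = of_int h * (\<Sum>j\<in>{1..<K}. (-1)^(r j) * (real j / K - 1/2))
                    + of_int h / 2 * (\<Sum>j\<in>{1..<K}. (-1)^(r j))
                    - (\<Sum>j\<in>{1..<K}. (-1)^(r j) * real (r j)) / real K"
    by (simp add: sum_distrib_left sum_subtractf sum_divide_distrib field_simps flip: sum.distrib)
  finally show ?thesis unfolding signs weighted_signs using m by (simp add: field_simps)
qed

lemma residue_sign_cot_expansion:
  assumes "coprime h (int K)" and "odd h" and "odd K" and "j \<in> {1..<K}"
  shows "(-1::real)^(nat (h * int j mod int K))
           = (-1)^j * (\<Sum>i<K. cot (chebyshev_angle K i) * sin (2 * real j * (of_int h * chebyshev_angle K i)))
               / real K"
proof -
  have "K > 0" using assms(3) by (cases K) auto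
  have "(-1::real)^(nat (h * int j mod int K)) = (-1)^j * parity_sign (h * int j div int K)"
    by (simp flip: parity_sign_floor_div_eq_residue_sign[OF assms(2,3)] add: parity_sign_add parity_sign_of_nat)
  also have "parity_sign (h * int j div int K)
      = (\<Sum>i<K. cot (chebyshev_angle K i) * sin (2 * of_int (h * int j) * chebyshev_angle K i)) / real K"
    using cot_sin_sum_chebyshev_angle[OF \<open>K > 0\<close> not_dvd_mult_if_coprime[OF assms(1,4)]] by simp
  finally show ?thesis by (simp add: mult_ac)
qed

lemma cos_double_odd_multiple_chebyshev_angle:
  assumes "odd h" and "K > 0"
  shows "cos (2 * real K * (of_int h * chebyshev_angle K i)) = -1"
proof -
  have "2 * real K * (of_int h * chebyshev_angle K i) = pi * of_int (h * (2 * int i + 1))"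
    using assms(2) unfolding chebyshev_angle_def by (simp add: field_simps)
  moreover have "odd (h * (2 * int i + 1))" using assms(1) by simp
  ultimately show ?thesis by (simp only: cos_npi_int) simp
qed

lemma alternating_residue_sum_eq_cot_tan_sum:
  assumes "coprime h (int K)" and "odd h" and "odd K"
  shows "(\<Sum>j\<in>{1..<K}. (-1)^(nat (h * int j mod int K)) * (real j / K - 1/2))
           = (\<Sum>i<K. cot (chebyshev_angle K i) * tan (of_int h * chebyshev_angle K i)) / (2 * real K)"
proof -
  let ?\<theta> = "chebyshev_angle K"
  have "K > 0" using assms(3) by (cases K) auto
  have "(\<Sum>j\<in>{1..<K}. (-1)^(nat (h * int j mod int K)) * (real j / K - 1/2))
      = (\<Sum>j\<in>{1..<K}. \<Sum>i<K. cot (?\<theta> i)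
           * ((-1)^j * (real j / K - 1/2) * sin (2 * real j * (of_int h * ?\<theta> i)))) / real K"
    by (simp add: residue_sign_cot_expansion[OF assms] sum_divide_distrib sum_distrib_left
        sum_distrib_right mult_ac)
  also have "\<dots> = (\<Sum>i<K. cot (?\<theta> i)
           * (\<Sum>j=1..<K. (-1)^j * (real j / K - 1/2) * sin (2 * real j * (of_int h * ?\<theta> i)))) / real K"
    by (subst sum.swap) (simp add: sum_distrib_left)
  also have "\<dots> = (\<Sum>i<K. cot (?\<theta> i) * (tan (of_int h * ?\<theta> i) / 2)) / real K"
    by (simp only: sum_alternating_sawtooth_sin[OF assms(3)
          cos_double_odd_multiple_chebyshev_angle[OF assms(2) \<open>K > 0\<close>]])
  finally show ?thesis by (simp add: sum_divide_distrib)
qed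

lemma tan_cot_sum_eq_chebyshev_sum:
  assumes "odd K"
  shows "(\<Sum>j\<in>{1..int K} - {(int K + 1) div 2}.
            tan (pi * of_int h * of_int (2 * j - 1) / (2 * real K)) * cot (pi * of_int (2 * j - 1) / (2 * real K)))
         = (\<Sum>i<K. cot (chebyshev_angle K i) * tan (of_int h * chebyshev_angle K i))"
proof -
  let ?g = "\<lambda>j. tan (pi * of_int h * of_int (2 * j - 1) / (2 * real K)) * cot (pi * of_int (2 * j - 1) / (2 * real K))"
  have "K > 0" using assms by (cases K) auto
  have shift: "{1..int K} = (\<lambda>i. int i + 1) ` {..<K}"
  proof (intro subset_antisym subsetI)
    fix j assume "j \<in> {1..int K}"
    then show "j \<in> (\<lambda>i. int i + 1) ` {..<K}" by (intro image_eqI[of _ _ "nat (j - 1)"]) auto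
  qed auto
  have "?g ((int K + 1) div 2) = 0"
    \<comment> \<open>the excluded term has the junk factor \<open>tan (h\<pi>/2)\<close>, but \<open>cot (\<pi>/2) = 0\<close>\<close>
  proof -
    have "2 * ((int K + 1) div 2) - 1 = int K" using assms by (auto elim!: oddE)
    then show ?thesis using \<open>K > 0\<close> by (simp add: cot_def)
  qed
  then have "(\<Sum>j\<in>{1..int K} - {(int K + 1) div 2}. ?g j) = (\<Sum>j\<in>{1..int K}. ?g j)"
    using \<open>K > 0\<close> by (simp add: sum_diff1)
  also have "\<dots> = (\<Sum>i<K. ?g (int i + 1))"
    unfolding shift by (simp add: sum.reindex inj_on_def)
  also have "\<dots> = (\<Sum>i<K. cot (chebyshev_angle K i) * tan (of_int h * chebyshev_angle K i))"
    by (intro sum.cong refl) (simp add: chebyshev_angle_def field_simps)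
  finally show ?thesis .
qed

theorem theorem24:
  fixes h k :: int
  assumes "coprime h k" and "odd h" and "odd k" and "k > 0"
  shows "B1 h k =
    real_of_int h / (2 * real_of_int k) *
      (\<Sum>j\<in>{1..k} - {(k + 1) div 2}.
         tan (pi * real_of_int h * real_of_int (2 * j - 1) / (2 * real_of_int k)) *
         cot (pi * real_of_int (2 * j - 1) / (2 * real_of_int k)))
    + 1 / (2 * real_of_int k) - 1 / 2"
proof -
  obtain K :: nat where k: "k = int K" using assms(4) by (metis zero_le_imp_eq_int less_imp_le)
  have "coprime h (int K)" and "odd K" and "K > 0" using assms k by auto
  have "B1 h k = of_int h * (\<Sum>i<K. cot (chebyshev_angle K i) * tan (of_int h * chebyshev_angle K i)) / (2 * real K)
                 - (real K - 1) / (2 * real K)"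
    unfolding k B1_eq_alternating_residue_sum[OF \<open>coprime h (int K)\<close> assms(2) \<open>odd K\<close>]
      alternating_residue_sum_eq_cot_tan_sum[OF \<open>coprime h (int K)\<close> assms(2) \<open>odd K\<close>]
    by simp
  then show ?thesis
    unfolding k using tan_cot_sum_eq_chebyshev_sum[OF \<open>odd K\<close>, of h] \<open>K > 0\<close>
    by (simp add: field_simps)
qed

end
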